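(* In the standing setting of the context, assume $d_1>d_4$ and that every ball $B(x,r)$ is relatively compact in $M$. For $x,x_0\in M$, $r,t>0$ and $\theta>1$ let $R(x,r,t,\theta)=\mathbb{P}^x\big(d(X_s,x_0)\le r\text{ for some }s\in(t,\theta t]\big)$. There exist constants $c_1,c_2>0$ such that for all $r>0$, $t\ge\phi(r)$, $\theta\ge c_1$ and all $x,x_0\in M$ with $d(x,x_0)\le r$, $$R(x,r,t,\theta)\ge c_2\frac{V(r)}{\phi(r)}\,\frac{t}{V(\phi^{-1}(t))}.$$
   Context: Standing setting: $(M,d)$ is a locally compact separable metric space, $\mu$ a positive Radon measure on $M$ with full support, $(\mathcal{E},\mathcal{F})$ a regular Dirichlet form on $L^2(M;\mu)$ (no killing part), and $X=(\{X_t\},\{\mathbb P^x\})$ the associated $\mu$-symmetric Hunt process. $V,\phi$ are increasing functions on $(0,\infty)$, $\phi^{-1}$ the inverse of $\phi$, with constants $c_i,d_i>0$ ($i=1,\dots,4$) such that $c_1(R/r)^{d_1}\le V(R)/V(r)\le c_2(R/r)^{d_2}$ and $c_3(R/r)^{d_3}\le\phi(R)/\phi(r)\le c_4(R/r)^{d_4}$ for all $0<r<R<\infty$. $X$ has a symmetric heat kernel $p(t,x,y)$ defined for all $x,y\in M$, $t>0$, with $p(t,x,y)\asymp\frac{1}{V(\phi^{-1}(t))}\wedge\frac{t}{V(d(x,y))\phi(d(x,y))}$ for all $x,y,t$ (comparison constants independent of $x,y,t$). *)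

theory Defs
  imports "HOL-Probability.Probability"
begin

text \<open>The cemetery state Delta is represented by None, points of M by Some y.\<close>

definition borelD :: "'a::topological_space option measure" where
  "borelD = sigma UNIV (insert {None} ((\<lambda>A. Some ` A) ` sets borel))"

text \<open>Convergence in M_Delta (one-point compactification topology; if M is
  compact, Delta is isolated, which is also what this says).\<close>

definition tendstoD :: "('b \<Rightarrow> 'a::metric_space option) \<Rightarrow> 'b filter \<Rightarrow> 'a option \<Rightarrow> bool" where
  "tendstoD f F L = (case L of
      Some y \<Rightarrow> eventually (\<lambda>s. f s \<noteq> None) F \<and> ((\<lambda>s. the (f s)) \<longlongrightarrow> y) F
    | None \<Rightarrow> (\<forall>K. compact K \<longrightarrow> eventually (\<lambda>s. f s \<notin> Some ` K) F))"

definition natF :: "'w set \<Rightarrow> (real \<Rightarrow> 'w \<Rightarrow> 'a::topological_space option) \<Rightarrow> ennreal \<Rightarrow> 'w measure" where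
  "natF \<Omega> X t = sigma \<Omega> {X u -` B \<inter> \<Omega> | u B. 0 \<le> u \<and> ennreal u \<le> t \<and> B \<in> sets borelD}"

text \<open>Augmented filtration F_t = intersection over all initial distributions nu
  of the P_nu-completions of F^0_t, where P_nu = integral of P^x nu(dx).\<close>

definition augF_sets :: "'w set \<Rightarrow> (real \<Rightarrow> 'w \<Rightarrow> 'a::topological_space option) \<Rightarrow> ('a \<Rightarrow> 'w measure)
    \<Rightarrow> ennreal \<Rightarrow> 'w set set" where
  "augF_sets \<Omega> X P t = {A. A \<subseteq> \<Omega> \<and>
     (\<forall>\<nu>::'a measure. prob_space \<nu> \<and> sets \<nu> = sets borel \<longrightarrow>
        (\<exists>A' \<in> sets (natF \<Omega> X t). \<exists>N \<in> sets (natF \<Omega> X \<infinity>).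
            (A - A') \<union> (A' - A) \<subseteq> N \<and> (\<integral>\<^sup>+ x. emeasure (P x) N \<partial>\<nu>) = 0))}"

definition augF :: "'w set \<Rightarrow> (real \<Rightarrow> 'w \<Rightarrow> 'a::topological_space option) \<Rightarrow> ('a \<Rightarrow> 'w measure)
    \<Rightarrow> ennreal \<Rightarrow> 'w measure" where
  "augF \<Omega> X P t = sigma \<Omega> (augF_sets \<Omega> X P t)"

definition pre_tau :: "(ennreal \<Rightarrow> 'w measure) \<Rightarrow> ('w \<Rightarrow> ennreal) \<Rightarrow> 'w set set" where
  "pre_tau F \<tau> = {A \<in> sets (F \<infinity>). \<forall>t. {\<omega> \<in> A. \<tau> \<omega> \<le> t} \<in> sets (F t)}"

text \<open>Transition probability from a point of M_Delta (Delta is a trap).\<close>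

definition transD :: "'w set \<Rightarrow> (real \<Rightarrow> 'w \<Rightarrow> 'a option) \<Rightarrow> ('a \<Rightarrow> 'w measure)
    \<Rightarrow> real \<Rightarrow> 'a option set \<Rightarrow> 'a option \<Rightarrow> ennreal" where
  "transD \<Omega> X P s B z = (case z of
      None \<Rightarrow> indicator B None
    | Some y \<Rightarrow> emeasure (P y) {\<omega> \<in> \<Omega>. X s \<omega> \<in> B})"

section \<open>Hunt processes (Fukushima--Oshima--Takeda, Appendix A.2)\<close>

definition hunt_process :: "'w set \<Rightarrow> (real \<Rightarrow> 'w \<Rightarrow> 'a::metric_space option) \<Rightarrow> ('a \<Rightarrow> 'w measure) \<Rightarrow> bool" where
  "hunt_process \<Omega> X P \<longleftrightarrow>
     \<comment> \<open>probability measures on the natural sigma-algebra F^0_infinity\<close>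
     (\<forall>x. prob_space (P x) \<and> space (P x) = \<Omega> \<and> sets (P x) = sets (natF \<Omega> X \<infinity>)) \<and>
     (\<forall>A \<in> sets (natF \<Omega> X \<infinity>). (\<lambda>x. emeasure (P x) A) \<in> borel_measurable borel) \<and>
     \<comment> \<open>normality\<close>
     (\<forall>x. emeasure (P x) {\<omega> \<in> \<Omega>. X 0 \<omega> = Some x} = 1) \<and>
     \<comment> \<open>path regularity: right continuous, left limits in M_Delta, Delta absorbing\<close>
     (\<forall>\<omega> \<in> \<Omega>.
        (\<forall>t \<ge> 0. tendstoD (\<lambda>s. X s \<omega>) (at_right t) (X t \<omega>)) \<and>
        (\<forall>t > 0. \<exists>L. tendstoD (\<lambda>s. X s \<omega>) (at_left t) L) \<and>
        (\<forall>t s. 0 \<le> t \<longrightarrow> t \<le> s \<longrightarrow> X t \<omega> = None \<longrightarrow> X s \<omega> = None)) \<and>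
     \<comment> \<open>strong Markov property w.r.t. the augmented filtration\<close>
     (\<forall>\<tau>. stopping_time (augF \<Omega> X P) \<tau> \<longrightarrow>
        (\<forall>A \<in> pre_tau (augF \<Omega> X P) \<tau>. \<forall>s \<ge> 0. \<forall>B \<in> sets borelD. \<forall>x.
           emeasure (completion (P x))
             {\<omega> \<in> A. \<tau> \<omega> < \<infinity> \<and> X (enn2real (\<tau> \<omega>) + s) \<omega> \<in> B}
           = (\<integral>\<^sup>+ \<omega>. indicator {\<omega> \<in> A. \<tau> \<omega> < \<infinity>} \<omega> *
                 transD \<Omega> X P s B (X (enn2real (\<tau> \<omega>)) \<omega>) \<partial>completion (P x)))) \<and>
     \<comment> \<open>quasi-left continuity\<close>
     (\<forall>\<tau>s \<tau>. (\<forall>n. stopping_time (augF \<Omega> X P) (\<tau>s n)) \<and> (\<forall>\<omega>. incseq (\<lambda>n. \<tau>s n \<omega>)) \<and>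
        (\<forall>\<omega>. (\<lambda>n. \<tau>s n \<omega>) \<longlonglongrightarrow> \<tau> \<omega>) \<longrightarrow>
        (\<forall>x. AE \<omega> in P x. \<tau> \<omega> < \<infinity> \<longrightarrow>
             tendstoD (\<lambda>n. X (enn2real (\<tau>s n \<omega>)) \<omega>) sequentially (X (enn2real (\<tau> \<omega>)) \<omega>)))"

definition heat_kernel_of :: "'w set \<Rightarrow> (real \<Rightarrow> 'w \<Rightarrow> 'a::metric_space option) \<Rightarrow> ('a \<Rightarrow> 'w measure)
    \<Rightarrow> 'a measure \<Rightarrow> (real \<Rightarrow> 'a \<Rightarrow> 'a \<Rightarrow> real) \<Rightarrow> bool" where
  "heat_kernel_of \<Omega> X P \<mu> p \<longleftrightarrow>
     (\<forall>t > 0. \<forall>x y. 0 \<le> p t x y \<and> p t x y = p t y x) \<and>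
     (\<forall>t > 0. \<forall>x. (\<lambda>y. p t x y) \<in> borel_measurable borel) \<and>
     (\<forall>t > 0. \<forall>x. \<forall>A \<in> sets borel.
        emeasure (P x) {\<omega> \<in> \<Omega>. X t \<omega> \<in> Some ` A} = (\<integral>\<^sup>+ y \<in> A. ennreal (p t x y) \<partial>\<mu>))"

text \<open>L2 functions, transition semigroup P_t, and the Dirichlet form of the
  (symmetric) semigroup: E(u,v) = lim_{t->0+} (1/t)(u - P_t u, v),
  F = {u in L2 : the limit exists} (Fukushima et al., Lemma 1.3.4).\<close>

definition L2 :: "'a::topological_space measure \<Rightarrow> ('a \<Rightarrow> real) set" where
  "L2 \<mu> = {f. f \<in> borel_measurable \<mu> \<and> integrable \<mu> (\<lambda>x. (f x)\<^sup>2)}"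

definition semigroup :: "'a measure \<Rightarrow> (real \<Rightarrow> 'a \<Rightarrow> 'a \<Rightarrow> real) \<Rightarrow> real \<Rightarrow> ('a \<Rightarrow> real) \<Rightarrow> 'a \<Rightarrow> real" where
  "semigroup \<mu> p t f x = (\<integral> y. p t x y * f y \<partial>\<mu>)"

definition approx_form :: "'a measure \<Rightarrow> (real \<Rightarrow> 'a \<Rightarrow> 'a \<Rightarrow> real) \<Rightarrow> real \<Rightarrow> ('a \<Rightarrow> real) \<Rightarrow> ('a \<Rightarrow> real) \<Rightarrow> real" where
  "approx_form \<mu> p t u v = (1 / t) * (\<integral> x. (u x - semigroup \<mu> p t u x) * v x \<partial>\<mu>)"

definition form_domain :: "'a::topological_space measure \<Rightarrow> (real \<Rightarrow> 'a \<Rightarrow> 'a \<Rightarrow> real) \<Rightarrow> ('a \<Rightarrow> real) set" where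
  "form_domain \<mu> p = {u \<in> L2 \<mu>. \<exists>L. ((\<lambda>t. approx_form \<mu> p t u u) \<longlongrightarrow> L) (at_right 0)}"

definition form :: "'a measure \<Rightarrow> (real \<Rightarrow> 'a \<Rightarrow> 'a \<Rightarrow> real) \<Rightarrow> ('a \<Rightarrow> real) \<Rightarrow> ('a \<Rightarrow> real) \<Rightarrow> real" where
  "form \<mu> p u v = Lim (at_right 0) (\<lambda>t. approx_form \<mu> p t u v)"

definition Cc :: "('a::metric_space \<Rightarrow> real) set" where
  "Cc = {f. continuous_on UNIV f \<and> compact (closure {x. f x \<noteq> 0})}"

text \<open>The Dirichlet form of p: P_t strongly continuous on L2, regular, and without
  killing part (killing measure k = vague limit of (1/t)(1 - P_t 1) mu vanishes).\<close>

definition regular_no_killing :: "'a::metric_space measure \<Rightarrow> (real \<Rightarrow> 'a \<Rightarrow> 'a \<Rightarrow> real) \<Rightarrow> bool" where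
  "regular_no_killing \<mu> p \<longleftrightarrow>
     (\<forall>f \<in> L2 \<mu>. ((\<lambda>t. \<integral> x. (semigroup \<mu> p t f x - f x)\<^sup>2 \<partial>\<mu>) \<longlongrightarrow> 0) (at_right 0)) \<and>
     (\<forall>g \<in> Cc. \<forall>\<epsilon> > 0. \<exists>f \<in> form_domain \<mu> p \<inter> Cc. \<forall>x. \<bar>f x - g x\<bar> \<le> \<epsilon>) \<and>
     (\<forall>g \<in> form_domain \<mu> p. \<forall>\<epsilon> > 0. \<exists>f \<in> form_domain \<mu> p \<inter> Cc.
        form \<mu> p (\<lambda>x. g x - f x) (\<lambda>x. g x - f x) + (\<integral> x. (g x - f x)\<^sup>2 \<partial>\<mu>) < \<epsilon>) \<and>
     (\<forall>u \<in> form_domain \<mu> p \<inter> Cc.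
        ((\<lambda>t. (1 / t) * (\<integral> x. (u x)\<^sup>2 * (1 - (\<integral> y. p t x y \<partial>\<mu>)) \<partial>\<mu>)) \<longlongrightarrow> 0) (at_right 0))"

definition hk_profile :: "(real \<Rightarrow> real) \<Rightarrow> (real \<Rightarrow> real) \<Rightarrow> (real \<Rightarrow> real) \<Rightarrow> real \<Rightarrow> 'a::metric_space \<Rightarrow> 'a \<Rightarrow> real" where
  "hk_profile V \<phi> \<phi>inv t x y =
     (if x = y then 1 / V (\<phi>inv t)
      else min (1 / V (\<phi>inv t)) (t / (V (dist x y) * \<phi> (dist x y))))"

text \<open>R(x,r,t,theta) = P^x(d(X_s,x0) <= r for some s in (t, theta t]), taken as
  inner probability (sup of P^x(A) over measurable A contained in the event).\<close>

definition hit_event :: "'w set \<Rightarrow> (real \<Rightarrow> 'w \<Rightarrow> 'a::metric_space option) \<Rightarrow> 'a \<Rightarrow> real \<Rightarrow> real \<Rightarrow> real \<Rightarrow> 'w set" where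
  "hit_event \<Omega> X x0 r t \<theta> = {\<omega> \<in> \<Omega>. \<exists>s. t < s \<and> s \<le> \<theta> * t \<and>
      (case X s \<omega> of None \<Rightarrow> False | Some y \<Rightarrow> dist y x0 \<le> r)}"

definition R_hit :: "'w set \<Rightarrow> (real \<Rightarrow> 'w \<Rightarrow> 'a::metric_space option) \<Rightarrow> ('a \<Rightarrow> 'w measure)
    \<Rightarrow> 'a \<Rightarrow> 'a \<Rightarrow> real \<Rightarrow> real \<Rightarrow> real \<Rightarrow> real" where
  "R_hit \<Omega> X P x0 x r t \<theta> =
     Sup {measure (P x) A | A. A \<in> sets (P x) \<and> A \<subseteq> hit_event \<Omega> X x0 r t \<theta>}"

end

theory Submission
  imports Defs
begin

text \<open>Put \<open>h = \<phi> r\<close>, \<open>n = \<lfloor>t / h\<rfloor>\<close> and let \<open>A\<^sub>k\<close> (\<open>k < n\<close>) be the event that \<open>X\<close> lies in the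
  closed ball \<open>B = B(x\<^sub>0, r)\<close> at time \<open>t + (k + 1) h \<in> (t, 2 t]\<close>. The two-sided heat kernel bounds
  and \<open>\<mu>(B) \<approx> V r\<close> bound each \<open>P\<^sup>x(A\<^sub>k)\<close> from below by a constant times
  \<open>V r / V (\<phi>\<inverse> t)\<close>. Conversely, decomposing \<open>\<Union>\<^sub>k A\<^sub>k\<close> according to the first \<open>k\<close> with \<open>A\<^sub>k\<close>
  and applying the Markov property at that time gives
  \<open>\<Sum>\<^sub>k P\<^sup>x(A\<^sub>k) \<le> (1 + \<Sum>\<^sub>m q\<^sub>m) P\<^sup>x(\<Union>\<^sub>k A\<^sub>k)\<close>, where \<open>q\<^sub>m\<close> bounds the probability of being
  in \<open>B\<close> at time \<open>m h\<close> from any starting point. The on-diagonal bound gives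
  \<open>q\<^sub>m \<lesssim> V r / V (\<phi>\<inverse> (m \<phi> r)) \<lesssim> m powr (- d1 / d4)\<close>, which is summable because
  \<open>d1 > d4\<close>. Hence \<open>R(x, r, t, \<theta>) \<ge> P\<^sup>x(\<Union>\<^sub>k A\<^sub>k)\<close> is at least a constant times
  \<open>(t / \<phi> r) V r / V (\<phi>\<inverse> t)\<close>.\<close>

section \<open>First-entrance decomposition\<close>

lemma sum_triangle_swap:
  fixes g :: "nat \<Rightarrow> nat \<Rightarrow> 'a::comm_monoid_add"
  shows "(\<Sum>k<n. \<Sum>j\<le>k. g j k) = (\<Sum>j<n. \<Sum>k\<in>{j..<n}. g j k)"
proof -
  have "(\<Sum>k<n. \<Sum>j\<in>{j. j \<in> {..<n} \<and> j \<le> k}. g j k) = (\<Sum>j<n. \<Sum>k\<in>{k. k \<in> {..<n} \<and> j \<le> k}. g j k)"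
    by (rule sum.swap_restrict) auto
  moreover have "{j. j \<in> {..<n} \<and> j \<le> k} = {..k}" if "k < n" for k
    using that by auto
  moreover have "{k. k \<in> {..<n} \<and> j \<le> k} = {j..<n}" for j
    by auto
  ultimately show ?thesis by simp
qed

lemma sum_measure_le_measure_UN:
  fixes M :: "'a measure" and A :: "nat \<Rightarrow> 'a set" and w :: "nat \<Rightarrow> real"
  assumes M: "finite_measure M" and A: "\<And>k. A k \<in> sets M"
    and w_nonneg: "\<And>m. 0 \<le> w m"
    and renewal: "\<And>j k. j < k \<Longrightarrow> k < n \<Longrightarrow>
       measure M (disjointed A j \<inter> A k) \<le> measure M (disjointed A j) * w (k - j)"
  shows "(\<Sum>k<n. measure M (A k)) \<le> (1 + (\<Sum>m\<in>{1..<n}. w m)) * measure M (\<Union>k<n. A k)"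
proof -
  interpret finite_measure M by (rule M)
  define v where "v j k = (if j = k then 1 else w (k - j))" for j k
  have D: "disjointed A j \<in> sets M" for j
    unfolding disjointed_def using A by (intro sets.Diff sets.finite_UN) auto
  have split: "measure M (A k) = (\<Sum>j\<le>k. measure M (disjointed A j \<inter> A k))" for k
  proof -
    have "A k = (\<Union>j\<le>k. disjointed A j \<inter> A k)"
      using finite_UN_disjointed_eq[of A "Suc k"] by (auto simp: atLeast0LessThan lessThan_Suc_atMost)
    moreover have disj: "disjoint_family_on (\<lambda>j. disjointed A j \<inter> A k) {..k}"
      using disjoint_family_disjointed[of A] by (auto simp: disjoint_family_on_def)
    moreover have "measure M (\<Union>j\<le>k. disjointed A j \<inter> A k) = (\<Sum>j\<le>k. measure M (disjointed A j \<inter> A k))"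
      using A D disj by (intro finite_measure_finite_Union) auto
    ultimately show ?thesis by simp
  qed
  have piece: "measure M (disjointed A j \<inter> A k) \<le> measure M (disjointed A j) * v j k"
    if "j \<le> k" "k < n" for j k
    using that renewal[of j k] D by (cases "j = k") (auto simp: v_def intro!: finite_measure_mono)
  have inner: "(\<Sum>k\<in>{j..<n}. v j k) \<le> 1 + (\<Sum>m\<in>{1..<n}. w m)" if "j < n" for j
  proof -
    have "(\<Sum>k\<in>{j..<n}. v j k) = 1 + (\<Sum>k\<in>{Suc j..<n}. w (k - j))"
      using that by (simp add: v_def sum.atLeast_Suc_lessThan)
    also have "(\<Sum>k\<in>{Suc j..<n}. w (k - j)) = (\<Sum>m\<in>{1..<n - j}. w m)"
      using that by (intro sum.reindex_bij_witness[of _ "\<lambda>m. m + j" "\<lambda>k. k - j"]) auto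
    also have "\<dots> \<le> (\<Sum>m\<in>{1..<n}. w m)"
      using w_nonneg by (intro sum_mono2) auto
    finally show ?thesis by simp
  qed
  have "(\<Sum>k<n. measure M (A k)) = (\<Sum>k<n. \<Sum>j\<le>k. measure M (disjointed A j \<inter> A k))"
    using split by simp
  also have "\<dots> \<le> (\<Sum>k<n. \<Sum>j\<le>k. measure M (disjointed A j) * v j k)"
    using piece by (intro sum_mono) auto
  also have "\<dots> = (\<Sum>j<n. measure M (disjointed A j) * (\<Sum>k\<in>{j..<n}. v j k))"
    unfolding sum_distrib_left by (rule sum_triangle_swap)
  also have "\<dots> \<le> (\<Sum>j<n. measure M (disjointed A j) * (1 + (\<Sum>m\<in>{1..<n}. w m)))"
    using inner by (intro sum_mono mult_left_mono) auto
  also have "\<dots> = (1 + (\<Sum>m\<in>{1..<n}. w m)) * (\<Sum>j<n. measure M (disjointed A j))"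
    by (simp add: sum_distrib_left mult.commute)
  also have "(\<Sum>j<n. measure M (disjointed A j)) = measure M (\<Union>j<n. disjointed A j)"
    using D disjoint_family_disjointed[of A]
    by (intro finite_measure_finite_Union[symmetric]) (auto simp: disjoint_family_on_def)
  also have "(\<Union>j<n. disjointed A j) = (\<Union>k<n. A k)"
    using finite_UN_disjointed_eq[of A n] by (simp add: atLeast0LessThan)
  finally show ?thesis .
qed

lemma nat_floor_divide_bounds:
  fixes h t :: real
  assumes "0 < h" "h \<le> t"
  shows "t / (2 * h) \<le> real (nat \<lfloor>t / h\<rfloor>)" and "real (nat \<lfloor>t / h\<rfloor>) * h \<le> t"
proof -
  define q where "q = t / h"
  have q: "1 \<le> q" "t / (2 * h) = q / 2" "t = q * h"
    using assms by (simp_all add: q_def)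
  then have "1 \<le> \<lfloor>q\<rfloor>" by (simp add: one_le_floor)
  then have n: "real (nat \<lfloor>t / h\<rfloor>) = real_of_int \<lfloor>q\<rfloor>" by (simp add: q_def)
  have "q - 1 < real_of_int \<lfloor>q\<rfloor>" "real_of_int \<lfloor>q\<rfloor> \<le> q" "1 \<le> real_of_int \<lfloor>q\<rfloor>"
    using \<open>1 \<le> \<lfloor>q\<rfloor>\<close> by linarith+
  then have "q / 2 \<le> real_of_int \<lfloor>q\<rfloor>" "real_of_int \<lfloor>q\<rfloor> * h \<le> q * h"
    using assms by (linarith, simp)
  then show "t / (2 * h) \<le> real (nat \<lfloor>t / h\<rfloor>)" "real (nat \<lfloor>t / h\<rfloor>) * h \<le> t"
    unfolding n q(2) by (simp_all add: q(3)[symmetric])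
qed

lemma grid_in_window:
  fixes h t :: real
  assumes "0 < h" "real n * h \<le> t" "k < n"
  shows "t < t + h + real k * h \<and> t + h + real k * h \<le> 2 * t"
proof -
  have "h + real k * h \<le> real n * h"
    using assms mult_right_mono[of "real (Suc k)" "real n" h] by (simp add: algebra_simps)
  moreover have "0 \<le> real k * h"
    using assms by simp
  ultimately show ?thesis
    using assms by linarith
qed

section \<open>Events of the process and the Markov property\<close>

definition event_in :: "'w set \<Rightarrow> (real \<Rightarrow> 'w \<Rightarrow> 'a option) \<Rightarrow> real \<Rightarrow> 'a set \<Rightarrow> 'w set" where
  "event_in \<Omega> X u B = {\<omega> \<in> \<Omega>. X u \<omega> \<in> Some ` B}"

lemma grid_subset_hit_event:
  assumes "\<And>k. k < n \<Longrightarrow> t < s k \<and> s k \<le> \<theta> * t"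
  shows "(\<Union>k<n. event_in \<Omega> X (s k) (cball x0 r)) \<subseteq> hit_event \<Omega> X x0 r t \<theta>"
proof
  fix \<omega> assume "\<omega> \<in> (\<Union>k<n. event_in \<Omega> X (s k) (cball x0 r))"
  then obtain k y where "k < n" "\<omega> \<in> \<Omega>" "X (s k) \<omega> = Some y" "dist y x0 \<le> r"
    by (auto simp: event_in_def dist_commute)
  then show "\<omega> \<in> hit_event \<Omega> X x0 r t \<theta>"
    using assms unfolding hit_event_def by (intro CollectI conjI exI[of _ "s k"]) auto
qed

lemma space_natF [simp]: "space (natF \<Omega> X t) = \<Omega>"
  unfolding natF_def by (rule space_measure_of) auto

lemma sets_natF:
  "sets (natF \<Omega> X t) = sigma_sets \<Omega> {X u -` B \<inter> \<Omega> | u B. 0 \<le> u \<and> ennreal u \<le> t \<and> B \<in> sets borelD}"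
  unfolding natF_def by (rule sets_measure_of) auto

lemma natF_mono: "t1 \<le> t2 \<Longrightarrow> sets (natF \<Omega> X t1) \<subseteq> sets (natF \<Omega> X t2)"
  unfolding sets_natF by (rule sigma_sets_mono') (auto intro: order_trans)

lemma Some_in_borelD: "B \<in> sets borel \<Longrightarrow> Some ` B \<in> sets borelD"
  unfolding borelD_def by (subst sets_measure_of) auto

lemma event_in_natF:
  assumes "0 \<le> u" "ennreal u \<le> t" "B \<in> sets borel"
  shows "event_in \<Omega> X u B \<in> sets (natF \<Omega> X t)"
proof -
  have "event_in \<Omega> X u B = X u -` Some ` B \<inter> \<Omega>"
    unfolding event_in_def by auto
  then show ?thesis
    unfolding sets_natF using assms Some_in_borelD[OF assms(3)] by (auto intro: sigma_sets.Basic)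
qed

lemma natF_subset_augF:
  fixes X :: "real \<Rightarrow> 'w \<Rightarrow> 'a::topological_space option" and P :: "'a \<Rightarrow> 'w measure"
  assumes A: "A \<in> sets (natF \<Omega> X t)"
  shows "A \<in> sets (augF \<Omega> X P t)"
proof -
  have "A \<in> augF_sets \<Omega> X P t"
    unfolding augF_sets_def
  proof (intro CollectI conjI allI impI)
    show "A \<subseteq> \<Omega>"
      using sets.sets_into_space[OF A] by simp
    fix \<nu> :: "'a measure"
    show "\<exists>A' \<in> sets (natF \<Omega> X t). \<exists>N \<in> sets (natF \<Omega> X \<infinity>).
            (A - A') \<union> (A' - A) \<subseteq> N \<and> (\<integral>\<^sup>+ x. emeasure (P x) N \<partial>\<nu>) = 0"
      using A by (intro bexI[of _ A] bexI[of _ "{}"]) auto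
  qed
  moreover have "augF_sets \<Omega> X P t \<subseteq> Pow \<Omega>"
    unfolding augF_sets_def by auto
  ultimately show ?thesis
    unfolding augF_def by (subst sets_measure_of) auto
qed

context
  fixes \<Omega> :: "'w set" and X :: "real \<Rightarrow> 'w \<Rightarrow> 'a::metric_space option" and P :: "'a \<Rightarrow> 'w measure"
  assumes hunt: "hunt_process \<Omega> X P"
begin

lemma hunt_prob_space: "prob_space (P x)"
  and hunt_sets: "sets (P x) = sets (natF \<Omega> X \<infinity>)"
  and hunt_space: "space (P x) = \<Omega>"
  using hunt unfolding hunt_process_def by blast+

lemma hunt_emeasure_eq_measure: "emeasure (P x) A = ennreal (measure (P x) A)"
proof -
  interpret prob_space "P x" by (rule hunt_prob_space)
  show ?thesis by (rule emeasure_eq_measure)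
qed

lemma hunt_measure_le_1: "measure (P x) A \<le> 1"
  using prob_space.prob_le_1[OF hunt_prob_space] .

lemma event_in_sets: "0 \<le> u \<Longrightarrow> B \<in> sets borel \<Longrightarrow> event_in \<Omega> X u B \<in> sets (P x)"
  unfolding hunt_sets by (rule event_in_natF) auto

lemma markov_property:
  assumes u: "0 \<le> u" and s: "0 \<le> s" and B: "B \<in> sets borel"
    and F: "F \<in> sets (natF \<Omega> X (ennreal u))"
  shows "emeasure (P x) (F \<inter> event_in \<Omega> X (u + s) B)
         = (\<integral>\<^sup>+ \<omega>. indicator F \<omega> * transD \<Omega> X P s (Some ` B) (X u \<omega>) \<partial>P x)"
proof -
  have strong_markov: "\<forall>\<tau>. stopping_time (augF \<Omega> X P) \<tau> \<longrightarrow>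
        (\<forall>A \<in> pre_tau (augF \<Omega> X P) \<tau>. \<forall>s \<ge> 0. \<forall>B \<in> sets borelD. \<forall>x.
           emeasure (completion (P x))
             {\<omega> \<in> A. \<tau> \<omega> < \<infinity> \<and> X (enn2real (\<tau> \<omega>) + s) \<omega> \<in> B}
           = (\<integral>\<^sup>+ \<omega>. indicator {\<omega> \<in> A. \<tau> \<omega> < \<infinity>} \<omega> *
                 transD \<Omega> X P s B (X (enn2real (\<tau> \<omega>)) \<omega>) \<partial>completion (P x)))"
    using hunt unfolding hunt_process_def by blast
  have F_inf: "F \<in> sets (natF \<Omega> X \<infinity>)"
    using natF_mono[of "ennreal u" \<infinity>] F by auto
  have const: "stopping_time (augF \<Omega> X P) (\<lambda>_. ennreal u)"
    by (rule stopping_time_const)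
  have "{\<omega> \<in> F. ennreal u \<le> t} \<in> sets (augF \<Omega> X P t)" for t
  proof (cases "ennreal u \<le> t")
    case True
    then have "F \<in> sets (natF \<Omega> X t)"
      using natF_mono[of "ennreal u" t \<Omega> X] F by auto
    then show ?thesis
      using True by (simp add: natF_subset_augF)
  qed simp
  then have "F \<in> pre_tau (augF \<Omega> X P) (\<lambda>_. ennreal u)"
    unfolding pre_tau_def using natF_subset_augF[OF F_inf] by blast
  then have "emeasure (completion (P x))
      {\<omega> \<in> F. ennreal u < \<infinity> \<and> X (enn2real (ennreal u) + s) \<omega> \<in> Some ` B}
      = (\<integral>\<^sup>+ \<omega>. indicator {\<omega> \<in> F. ennreal u < \<infinity>} \<omega> *
           transD \<Omega> X P s (Some ` B) (X (enn2real (ennreal u)) \<omega>) \<partial>completion (P x))"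
    using strong_markov const s Some_in_borelD[OF B] by blast
  moreover have "{\<omega> \<in> F. ennreal u < \<infinity> \<and> X (enn2real (ennreal u) + s) \<omega> \<in> Some ` B}
      = F \<inter> event_in \<Omega> X (u + s) B"
    using sets.sets_into_space[OF F] u by (auto simp: event_in_def)
  moreover have "F \<inter> event_in \<Omega> X (u + s) B \<in> sets (P x)"
    using F_inf event_in_sets[of "u + s" B] u s B by (auto simp: hunt_sets)
  ultimately show ?thesis
    using u by (simp add: nn_integral_completion main_part_sets)
qed

lemma measure_markov_le:
  assumes u: "0 \<le> u" and s: "0 \<le> s" and B: "B \<in> sets borel"
    and F: "F \<in> sets (natF \<Omega> X (ennreal u))" and c: "0 \<le> c"
    and bound: "\<And>\<omega> y. \<omega> \<in> F \<Longrightarrow> X u \<omega> = Some y \<Longrightarrow> measure (P y) (event_in \<Omega> X s B) \<le> c"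
  shows "measure (P x) (F \<inter> event_in \<Omega> X (u + s) B) \<le> c * measure (P x) F"
proof -
  have pointwise: "indicator F \<omega> * transD \<Omega> X P s (Some ` B) (X u \<omega>) \<le> ennreal c * indicator F \<omega>" for \<omega>
  proof (cases "\<omega> \<in> F")
    case True
    then show ?thesis
      using bound[OF True] by (cases "X u \<omega>")
        (auto simp: transD_def hunt_emeasure_eq_measure event_in_def intro: ennreal_leI)
  qed simp
  have F_sets: "F \<in> sets (P x)"
    using natF_mono[of "ennreal u" \<infinity>] F by (auto simp: hunt_sets)
  have "ennreal (measure (P x) (F \<inter> event_in \<Omega> X (u + s) B))
      = (\<integral>\<^sup>+ \<omega>. indicator F \<omega> * transD \<Omega> X P s (Some ` B) (X u \<omega>) \<partial>P x)"
    using markov_property[OF u s B F] by (simp add: hunt_emeasure_eq_measure)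
  also have "\<dots> \<le> (\<integral>\<^sup>+ \<omega>. ennreal c * indicator F \<omega> \<partial>P x)"
    by (intro nn_integral_mono pointwise)
  also have "\<dots> = ennreal (c * measure (P x) F)"
    using F_sets c by (simp add: nn_integral_cmult_indicator hunt_emeasure_eq_measure ennreal_mult)
  finally show ?thesis
    using c by (simp add: ennreal_le_iff)
qed

lemma measure_markov_split_le:
  assumes u: "0 \<le> u" and s: "0 \<le> s" and B: "B \<in> sets borel" and G: "G \<in> sets borel"
    and a: "0 \<le> a" and b: "0 \<le> b"
    and inside: "\<And>y. y \<in> G \<Longrightarrow> measure (P y) (event_in \<Omega> X s B) \<le> a"
    and outside: "\<And>y. y \<notin> G \<Longrightarrow> measure (P y) (event_in \<Omega> X s B) \<le> b"
  shows "measure (P x) (event_in \<Omega> X (u + s) B) \<le> a * measure (P x) (event_in \<Omega> X u G) + b"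
proof -
  interpret prob_space "P x" by (rule hunt_prob_space)
  define E where "E = event_in \<Omega> X u G"
  have E: "E \<in> sets (natF \<Omega> X (ennreal u))"
    unfolding E_def using u G by (intro event_in_natF) auto
  have E': "\<Omega> - E \<in> sets (natF \<Omega> X (ennreal u))"
    using E sets.compl_sets[OF E] by simp
  have E_sets: "E \<in> sets (P x)" and Ev_sets: "event_in \<Omega> X (u + s) B \<in> sets (P x)"
    using event_in_sets u s B G by (auto simp: E_def)
  have E'_sets: "\<Omega> - E \<in> sets (P x)"
    using sets.compl_sets[OF E_sets] by (simp add: hunt_space)
  have "event_in \<Omega> X (u + s) B = (E \<inter> event_in \<Omega> X (u + s) B) \<union> ((\<Omega> - E) \<inter> event_in \<Omega> X (u + s) B)"
    by (auto simp: event_in_def)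
  then have "measure (P x) (event_in \<Omega> X (u + s) B)
      = measure (P x) (E \<inter> event_in \<Omega> X (u + s) B) + measure (P x) ((\<Omega> - E) \<inter> event_in \<Omega> X (u + s) B)"
    using E_sets E'_sets Ev_sets finite_measure_Union[of "E \<inter> event_in \<Omega> X (u + s) B" "(\<Omega> - E) \<inter> event_in \<Omega> X (u + s) B"]
    by auto
  also have "\<dots> \<le> a * measure (P x) E + b * measure (P x) (\<Omega> - E)"
    using inside outside u s B E E' a b
    by (intro add_mono measure_markov_le) (auto simp: E_def event_in_def)
  also have "\<dots> \<le> a * measure (P x) E + b"
    using b hunt_measure_le_1[of x "\<Omega> - E"] by (simp add: mult_left_le)
  finally show ?thesis unfolding E_def .
qed


lemma measure_first_visit_le:
  assumes a: "0 < a" and h: "0 < h" and jk: "j < k" and B: "B \<in> sets borel" and c: "0 \<le> c"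
    and bound: "\<And>y. measure (P y) (event_in \<Omega> X (real (k - j) * h) B) \<le> c"
  defines "A \<equiv> \<lambda>k. event_in \<Omega> X (a + real k * h) B"
  shows "measure (P x) (disjointed A j \<inter> A k) \<le> c * measure (P x) (disjointed A j)"
proof -
  have "A i \<in> sets (natF \<Omega> X (ennreal (a + real j * h)))" if "i \<le> j" for i
    unfolding A_def using a h that B
    by (intro event_in_natF) (auto intro: add_nonneg_nonneg mult_right_mono)
  then have "disjointed A j \<in> sets (natF \<Omega> X (ennreal (a + real j * h)))"
    unfolding disjointed_def by (intro sets.Diff sets.finite_UN) auto
  then have "measure (P x) (disjointed A j \<inter> event_in \<Omega> X (a + real j * h + real (k - j) * h) B)
      \<le> c * measure (P x) (disjointed A j)"
    using a h B c bound by (intro measure_markov_le) auto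
  moreover have "a + real j * h + real (k - j) * h = a + real k * h"
    using jk by (simp add: of_nat_diff algebra_simps)
  ultimately show ?thesis
    by (simp add: A_def)
qed

end

section \<open>Scale functions\<close>

lemma le_max_scaled:
  fixes a b c q :: real
  assumes "0 < a" "b / a \<le> c * q" "0 \<le> q"
  shows "b \<le> max 1 c * q * a"
proof -
  have "b \<le> c * q * a" using assms(1,2) by (simp add: field_simps)
  also have "\<dots> \<le> max 1 c * q * a" using assms(1,3) by (intro mult_right_mono) auto
  finally show ?thesis .
qed

lemma min_scaled_le:
  fixes a b c q :: real
  assumes "0 < a" "c * q \<le> b / a" "0 \<le> q"
  shows "min 1 c * q * a \<le> b"
proof -
  have "min 1 c * q * a \<le> c * q * a" using assms(1,3) by (intro mult_right_mono) auto
  also have "\<dots> \<le> b" using assms(1,2) by (simp add: field_simps)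
  finally show ?thesis .
qed

locale scale_functions =
  fixes V \<phi> :: "real \<Rightarrow> real" and c1 c2 c3 c4 d1 d2 d3 d4 :: real
  assumes V_pos: "\<And>r. r > 0 \<Longrightarrow> V r > 0"
    and V_mono: "mono_on {0<..} V"
    and phi_mono: "strict_mono_on {0<..} \<phi>"
    and phi_onto: "\<phi> ` {0<..} = {0<..}"
    and consts_pos: "c1 > 0" "c2 > 0" "c3 > 0" "c4 > 0" "d1 > 0" "d2 > 0" "d3 > 0" "d4 > 0"
    and V_scale: "\<And>r R. 0 < r \<Longrightarrow> r < R \<Longrightarrow>
                    c1 * (R / r) powr d1 \<le> V R / V r \<and> V R / V r \<le> c2 * (R / r) powr d2"
    and phi_scale: "\<And>r R. 0 < r \<Longrightarrow> r < R \<Longrightarrow>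
                    c3 * (R / r) powr d3 \<le> \<phi> R / \<phi> r \<and> \<phi> R / \<phi> r \<le> c4 * (R / r) powr d4"
begin

definition \<psi> :: "real \<Rightarrow> real" where
  "\<psi> = the_inv_into {0<..} \<phi>"

lemma phi_pos: "r > 0 \<Longrightarrow> \<phi> r > 0"
  using phi_onto by auto

lemma psi_pos: "t > 0 \<Longrightarrow> \<psi> t > 0"
  and phi_psi: "t > 0 \<Longrightarrow> \<phi> (\<psi> t) = t"
  and psi_phi: "r > 0 \<Longrightarrow> \<psi> (\<phi> r) = r"
  using the_inv_into_into[of \<phi> "{0<..}" t "{0<..}"] f_the_inv_into_f[of \<phi> "{0<..}" t]
    the_inv_into_f_f[of \<phi> "{0<..}" r] strict_mono_on_imp_inj_on[OF phi_mono] phi_onto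
  by (auto simp: \<psi>_def)

lemma phi_le_iff:
  assumes "0 < a" "0 < b"
  shows "\<phi> a \<le> \<phi> b \<longleftrightarrow> a \<le> b"
proof -
  have "a < b \<Longrightarrow> \<phi> a < \<phi> b" "b < a \<Longrightarrow> \<phi> b < \<phi> a"
    using phi_mono assms by (auto simp: strict_mono_on_def)
  then show ?thesis by (cases a b rule: linorder_cases) auto
qed

lemma psi_mono: "0 < s \<Longrightarrow> s \<le> t \<Longrightarrow> \<psi> s \<le> \<psi> t"
  using phi_le_iff[of "\<psi> s" "\<psi> t"] psi_pos phi_psi by auto

lemma le_psi_iff: "0 < r \<Longrightarrow> 0 < t \<Longrightarrow> r \<le> \<psi> t \<longleftrightarrow> \<phi> r \<le> t"
  using phi_le_iff[of r "\<psi> t"] psi_pos phi_psi by auto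

lemma V_le: "0 < a \<Longrightarrow> a \<le> b \<Longrightarrow> V a \<le> V b"
  using V_mono by (auto simp: mono_on_def)

lemma V_le_scaled: "0 < r \<Longrightarrow> r \<le> R \<Longrightarrow> V R \<le> max 1 c2 * (R / r) powr d2 * V r"
  using V_pos[of r] V_scale[of r R] by (cases "r = R") (auto intro: le_max_scaled)

lemma V_ge_scaled: "0 < r \<Longrightarrow> r \<le> R \<Longrightarrow> min 1 c1 * (R / r) powr d1 * V r \<le> V R"
  using V_pos[of r] V_scale[of r R] by (cases "r = R") (auto intro: min_scaled_le)

lemma phi_le_scaled: "0 < r \<Longrightarrow> r \<le> R \<Longrightarrow> \<phi> R \<le> max 1 c4 * (R / r) powr d4 * \<phi> r"
  using phi_pos[of r] phi_scale[of r R] by (cases "r = R") (auto intro: le_max_scaled)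

lemma phi_ge_scaled: "0 < r \<Longrightarrow> r \<le> R \<Longrightarrow> min 1 c3 * (R / r) powr d3 * \<phi> r \<le> \<phi> R"
  using phi_pos[of r] phi_scale[of r R] by (cases "r = R") (auto intro: min_scaled_le)

lemma phi_growth:
  assumes "M > 0"
  obtains L where "L > 1" "\<And>\<rho>. \<rho> > 0 \<Longrightarrow> M * \<phi> \<rho> \<le> \<phi> (L * \<rho>)"
proof
  define c where "c = min 1 c3"
  have c: "c > 0" using consts_pos by (simp add: c_def)
  define L where "L = max 2 ((M / c) powr (1 / d3))"
  show "L > 1" by (simp add: L_def)
  have "M / c = ((M / c) powr (1 / d3)) powr d3"
    using consts_pos assms c by (simp add: powr_powr)
  also have "\<dots> \<le> L powr d3"
    using consts_pos by (intro powr_mono2) (auto simp: L_def)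
  finally have L: "M \<le> c * L powr d3"
    using c by (simp add: field_simps)
  fix \<rho> :: real assume \<rho>: "\<rho> > 0"
  have "M * \<phi> \<rho> \<le> c * L powr d3 * \<phi> \<rho>"
    using L phi_pos[OF \<rho>] by (intro mult_right_mono) auto
  also have "\<dots> \<le> \<phi> (L * \<rho>)"
    using phi_ge_scaled[of \<rho> "L * \<rho>"] \<rho> \<open>L > 1\<close> by (simp add: c_def)
  finally show "M * \<phi> \<rho> \<le> \<phi> (L * \<rho>)" .
qed

lemma V_psi_doubling:
  obtains K where "K > 0" "\<And>t t'. 0 < t \<Longrightarrow> t \<le> t' \<Longrightarrow> t' \<le> 2 * t \<Longrightarrow> V (\<psi> t') \<le> K * V (\<psi> t)"
proof -
  obtain L where L: "L > 1" "\<And>\<rho>. \<rho> > 0 \<Longrightarrow> 2 * \<phi> \<rho> \<le> \<phi> (L * \<rho>)"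
    using phi_growth[of 2] by auto
  have "V (\<psi> t') \<le> max 1 c2 * L powr d2 * V (\<psi> t)" if t: "0 < t" "t \<le> t'" "t' \<le> 2 * t" for t t'
  proof -
    have "t' \<le> \<phi> (L * \<psi> t)"
      using L(2)[of "\<psi> t"] psi_pos phi_psi t by auto
    then have "\<psi> t' \<le> L * \<psi> t"
      using le_psi_iff[of "\<psi> t'" "\<phi> (L * \<psi> t)"] psi_phi[of "L * \<psi> t"] psi_pos phi_psi L t by auto
    then have "V (\<psi> t') \<le> V (L * \<psi> t)"
      using V_le psi_pos t by auto
    also have "\<dots> \<le> max 1 c2 * L powr d2 * V (\<psi> t)"
      using V_le_scaled[of "\<psi> t" "L * \<psi> t"] psi_pos[of t] L t by auto
    finally show ?thesis .
  qed
  then show ?thesis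
    using that[of "max 1 c2 * L powr d2"] L by auto
qed

lemma V_psi_decay:
  obtains Q where "Q > 0"
    "\<And>r m. 0 < r \<Longrightarrow> 1 \<le> m \<Longrightarrow> V r / V (\<psi> (m * \<phi> r)) \<le> Q * m powr (- (d1 / d4))"
proof
  define a where "a = d1 / d4"
  define Q where "Q = max 1 c4 powr a / min 1 c1"
  show "Q > 0" using consts_pos by (simp add: Q_def)
  fix r m :: real assume r: "0 < r" and m: "1 \<le> m"
  define u where "u = \<psi> (m * \<phi> r)"
  have u: "0 < u" "\<phi> u = m * \<phi> r" "r \<le> u"
    using psi_pos phi_psi phi_pos[OF r] le_psi_iff[OF r] m by (auto simp: u_def)
  have "m \<le> max 1 c4 * (u / r) powr d4"
    using phi_le_scaled[OF r u(3)] u phi_pos[OF r] by (simp add: field_simps)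
  then have "(m / max 1 c4) powr a \<le> ((u / r) powr d4) powr a"
    using m consts_pos by (intro powr_mono2) (auto simp: a_def field_simps)
  also have "\<dots> = (u / r) powr d1"
    using consts_pos by (simp add: powr_powr a_def)
  finally have "min 1 c1 * (m / max 1 c4) powr a * V r \<le> min 1 c1 * (u / r) powr d1 * V r"
    using V_pos[OF r] consts_pos by (intro mult_right_mono mult_left_mono) auto
  also have "\<dots> \<le> V u"
    using V_ge_scaled[OF r u(3)] .
  finally have "min 1 c1 * (m / max 1 c4) powr a * V r \<le> V u" .
  then have "V r / V u \<le> 1 / (min 1 c1 * (m / max 1 c4) powr a)"
    using V_pos[OF r] V_pos[OF u(1)] consts_pos m by (simp add: field_simps)
  also have "\<dots> = Q * m powr (- a)"
    using consts_pos m by (simp add: Q_def powr_divide powr_minus field_simps)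
  finally show "V r / V (\<psi> (m * \<phi> r)) \<le> Q * m powr (- (d1 / d4))"
    unfolding u_def a_def .
qed

lemma V_phi_le_at_scale:
  obtains G where "G \<ge> 1"
    "\<And>r d s. 0 < r \<Longrightarrow> 0 < d \<Longrightarrow> d \<le> 2 * r \<Longrightarrow> \<phi> r \<le> s \<Longrightarrow> V d * \<phi> d \<le> G * V (\<psi> s) * s"
proof
  define G where "G = max 1 c2 * 2 powr d2 * (max 1 c4 * 2 powr d4)"
  show "G \<ge> 1"
    unfolding G_def using consts_pos by (intro mult_ge1_I) (auto simp: ge_one_powr_ge_zero)
  fix r d s :: real assume r: "0 < r" and d: "0 < d" "d \<le> 2 * r" and s: "\<phi> r \<le> s"
  have s_pos: "0 < s" using phi_pos[OF r] s by simp
  have "V d \<le> V (2 * r)"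
    using V_le d by auto
  also have "\<dots> \<le> max 1 c2 * 2 powr d2 * V r"
    using V_le_scaled[of r "2 * r"] r by simp
  also have "\<dots> \<le> max 1 c2 * 2 powr d2 * V (\<psi> s)"
    using V_le[of r "\<psi> s"] le_psi_iff[OF r s_pos] s r by (intro mult_left_mono) auto
  finally have "V d \<le> max 1 c2 * 2 powr d2 * V (\<psi> s)" .
  moreover have "\<phi> d \<le> max 1 c4 * 2 powr d4 * s"
  proof -
    have "\<phi> d \<le> \<phi> (2 * r)"
      using phi_le_iff[of d "2 * r"] d r by simp
    also have "\<dots> \<le> max 1 c4 * 2 powr d4 * \<phi> r"
      using phi_le_scaled[of r "2 * r"] r by simp
    also have "\<dots> \<le> max 1 c4 * 2 powr d4 * s"
      using s by (intro mult_left_mono) auto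
    finally show ?thesis .
  qed
  ultimately have "V d * \<phi> d \<le> (max 1 c2 * 2 powr d2 * V (\<psi> s)) * (max 1 c4 * 2 powr d4 * s)"
    using V_pos[OF d(1)] phi_pos[OF d(1)] by (intro mult_mono) auto
  then show "V d * \<phi> d \<le> G * V (\<psi> s) * s"
    by (simp add: G_def mult_ac)
qed

end

section \<open>Heat kernel estimates and volume of balls\<close>

locale hk_estimates = scale_functions V \<phi> c1 c2 c3 c4 d1 d2 d3 d4
  for V \<phi> :: "real \<Rightarrow> real" and c1 c2 c3 c4 d1 d2 d3 d4 :: real +
  fixes \<mu> :: "'a::metric_space measure"
    and \<Omega> :: "'w set" and X :: "real \<Rightarrow> 'w \<Rightarrow> 'a option" and P :: "'a \<Rightarrow> 'w measure"
    and p :: "real \<Rightarrow> 'a \<Rightarrow> 'a \<Rightarrow> real" and C :: real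
  assumes mu_borel: "sets \<mu> = sets borel"
    and mu_radon: "\<And>K. compact K \<Longrightarrow> emeasure \<mu> K < \<infinity>"
    and mu_full_support: "\<And>U. open U \<Longrightarrow> U \<noteq> {} \<Longrightarrow> emeasure \<mu> U > 0"
    and balls_rel_compact: "\<And>(x::'a) r. compact (closure (ball x r))"
    and hunt: "hunt_process \<Omega> X P"
    and hk: "heat_kernel_of \<Omega> X P \<mu> p"
    and C_pos: "C > 0"
    and hk_lower: "\<And>t x y. t > 0 \<Longrightarrow> C * hk_profile V \<phi> (the_inv_into {0<..} \<phi>) t x y \<le> p t x y"
    and hk_upper: "\<And>t x y. t > 0 \<Longrightarrow> p t x y \<le> (1 / C) * hk_profile V \<phi> (the_inv_into {0<..} \<phi>) t x y"
begin

lemma p_ge_profile: "t > 0 \<Longrightarrow> C * hk_profile V \<phi> \<psi> t x y \<le> p t x y"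
  using hk_lower by (simp add: \<psi>_def)

lemma p_le_profile: "t > 0 \<Longrightarrow> p t x y \<le> hk_profile V \<phi> \<psi> t x y / C"
  using hk_upper by (simp add: \<psi>_def)

lemma emeasure_ball_finite: "emeasure \<mu> (ball x r) < \<infinity>"
proof -
  have "emeasure \<mu> (ball x r) \<le> emeasure \<mu> (closure (ball x r))"
    by (rule emeasure_mono) (auto simp: mu_borel closure_subset)
  also have "\<dots> < \<infinity>"
    using mu_radon balls_rel_compact by blast
  finally show ?thesis .
qed

lemma emeasure_cball_finite: "emeasure \<mu> (cball x r) < \<infinity>"
proof -
  have "emeasure \<mu> (cball x r) \<le> emeasure \<mu> (ball x (r + 1))"
    by (rule emeasure_mono) (auto simp: mu_borel)
  then show ?thesis
    using emeasure_ball_finite[of x "r + 1"] by auto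
qed

lemma measure_ball_pos: "\<rho> > 0 \<Longrightarrow> measure \<mu> (ball x \<rho>) > 0"
  using mu_full_support[of "ball x \<rho>"] emeasure_ball_finite[of x \<rho>]
  by (auto simp: emeasure_eq_ennreal_measure)

lemma emeasure_event_in:
  "t > 0 \<Longrightarrow> B \<in> sets borel \<Longrightarrow>
     emeasure (P x) (event_in \<Omega> X t B) = (\<integral>\<^sup>+ y \<in> B. ennreal (p t x y) \<partial>\<mu>)"
  using hk unfolding heat_kernel_of_def event_in_def by blast

lemma prob_event_le:
  assumes t: "t > 0" and B: "B \<in> sets borel" "emeasure \<mu> B < \<infinity>" and c: "c \<ge> 0"
    and bound: "\<And>y. y \<in> B \<Longrightarrow> p t x y \<le> c"
  shows "measure (P x) (event_in \<Omega> X t B) \<le> c * measure \<mu> B"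
proof -
  have "ennreal (measure (P x) (event_in \<Omega> X t B)) = (\<integral>\<^sup>+ y. ennreal (p t x y) * indicator B y \<partial>\<mu>)"
    using emeasure_event_in[OF t B(1)] by (simp add: hunt_emeasure_eq_measure[OF hunt])
  also have "\<dots> \<le> (\<integral>\<^sup>+ y. ennreal c * indicator B y \<partial>\<mu>)"
    by (intro nn_integral_mono) (auto simp: indicator_def bound intro!: ennreal_leI)
  also have "\<dots> = ennreal (c * measure \<mu> B)"
    using B mu_borel c by (simp add: nn_integral_cmult_indicator emeasure_eq_ennreal_measure ennreal_mult)
  finally show ?thesis
    using c by (simp add: ennreal_le_iff)
qed

lemma prob_event_ge:
  assumes t: "t > 0" and B: "B \<in> sets borel" "emeasure \<mu> B < \<infinity>" and c: "c \<ge> 0"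
    and bound: "\<And>y. y \<in> B \<Longrightarrow> c \<le> p t x y"
  shows "c * measure \<mu> B \<le> measure (P x) (event_in \<Omega> X t B)"
proof -
  have "ennreal (c * measure \<mu> B) = (\<integral>\<^sup>+ y. ennreal c * indicator B y \<partial>\<mu>)"
    using B mu_borel c by (simp add: nn_integral_cmult_indicator emeasure_eq_ennreal_measure ennreal_mult)
  also have "\<dots> \<le> (\<integral>\<^sup>+ y. ennreal (p t x y) * indicator B y \<partial>\<mu>)"
    by (intro nn_integral_mono) (auto simp: indicator_def bound intro!: ennreal_leI)
  also have "\<dots> = ennreal (measure (P x) (event_in \<Omega> X t B))"
    using emeasure_event_in[OF t B(1)] by (simp add: hunt_emeasure_eq_measure[OF hunt])
  finally show ?thesis
    by (simp add: ennreal_le_iff)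
qed

lemma hk_profile_ge:
  assumes t: "t > 0" and G: "G \<ge> 1"
    and bound: "x \<noteq> y \<Longrightarrow> V (dist x y) * \<phi> (dist x y) \<le> G * V (\<psi> t) * t"
  shows "1 / (G * V (\<psi> t)) \<le> hk_profile V \<phi> \<psi> t x y"
proof -
  have V_psi: "V (\<psi> t) > 0" using V_pos psi_pos t by auto
  have diag: "1 / (G * V (\<psi> t)) \<le> 1 / V (\<psi> t)"
    using G V_psi by (simp add: field_simps)
  show ?thesis
  proof (cases "x = y")
    case False
    then have "V (dist x y) * \<phi> (dist x y) > 0"
      using V_pos phi_pos by simp
    then have "1 / (G * V (\<psi> t)) \<le> t / (V (dist x y) * \<phi> (dist x y))"
      using bound[OF False] G V_psi t by (simp add: field_simps)
    then show ?thesis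
      using diag by (simp add: hk_profile_def)
  qed (use diag in \<open>simp add: hk_profile_def\<close>)
qed

lemma p_ge_near:
  assumes t: "t > 0" and d: "dist x y \<le> \<psi> t"
  shows "C / V (\<psi> t) \<le> p t x y"
proof -
  have bound: "V (dist x y) * \<phi> (dist x y) \<le> 1 * V (\<psi> t) * t" if "x \<noteq> y"
  proof -
    have pos: "dist x y > 0" using that by simp
    have "V (dist x y) \<le> V (\<psi> t)" using V_le pos d by auto
    moreover have "\<phi> (dist x y) \<le> t" using le_psi_iff[OF pos t] d by simp
    ultimately show ?thesis
      using phi_pos[OF pos] V_pos[OF psi_pos[OF t]] by (simp add: mult_mono)
  qed
  then have "1 / V (\<psi> t) \<le> hk_profile V \<phi> \<psi> t x y"
    using hk_profile_ge[OF t order_refl bound] by simp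
  then show ?thesis
    using mult_left_mono[of _ _ C] C_pos p_ge_profile[OF t, of x y] by fastforce
qed

lemma p_le_diag:
  assumes t: "t > 0"
  shows "p t x y \<le> 1 / (C * V (\<psi> t))"
proof -
  have "p t x y \<le> hk_profile V \<phi> \<psi> t x y / C"
    using p_le_profile[OF t] .
  also have "\<dots> \<le> (1 / V (\<psi> t)) / C"
    using C_pos by (intro divide_right_mono) (auto simp: hk_profile_def)
  finally show ?thesis by (simp add: mult.commute)
qed

lemma p_le_far:
  assumes t: "t > 0" and a: "0 < a" "a \<le> dist x y"
  shows "p t x y \<le> t / (C * (V a * \<phi> a))"
proof -
  have d: "dist x y > 0" "x \<noteq> y" using a by auto
  have "V a * \<phi> a \<le> V (dist x y) * \<phi> (dist x y)"
    using V_le[OF a] phi_le_iff[OF a(1) d(1)] a V_pos[OF d(1)] phi_pos[OF a(1)] by (intro mult_mono) auto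
  then have "hk_profile V \<phi> \<psi> t x y \<le> t / (V a * \<phi> a)"
    using d t V_pos[OF a(1)] phi_pos[OF a(1)] V_pos[OF d(1)] phi_pos[OF d(1)]
    by (auto simp: hk_profile_def intro!: min.coboundedI2 divide_left_mono mult_pos_pos)
  then have "hk_profile V \<phi> \<psi> t x y / C \<le> t / (V a * \<phi> a) / C"
    using C_pos by (intro divide_right_mono) auto
  then show ?thesis
    using p_le_profile[OF t, of x y] by (simp add: mult.commute)
qed

lemma prob_event_le_diag:
  assumes "t > 0" "B \<in> sets borel" "emeasure \<mu> B < \<infinity>"
  shows "measure (P x) (event_in \<Omega> X t B) \<le> measure \<mu> B / (C * V (\<psi> t))"
proof -
  have "measure (P x) (event_in \<Omega> X t B) \<le> 1 / (C * V (\<psi> t)) * measure \<mu> B"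
    using p_le_diag[OF assms(1)] C_pos V_pos[OF psi_pos[OF assms(1)]] assms by (intro prob_event_le) auto
  then show ?thesis by simp
qed

lemma prob_event_ge_near:
  assumes t: "t > 0" and B: "B \<in> sets borel" "emeasure \<mu> B < \<infinity>" "B \<subseteq> cball x (\<psi> t)"
  shows "C / V (\<psi> t) * measure \<mu> B \<le> measure (P x) (event_in \<Omega> X t B)"
  using p_ge_near[OF t] B C_pos V_pos[OF psi_pos[OF t]]
  by (intro prob_event_ge[OF t B(1,2)]) (auto simp: subset_iff)

lemma prob_event_le_far:
  assumes t: "t > 0" and a: "0 < a" and B: "B \<in> sets borel" "emeasure \<mu> B < \<infinity>"
    and far: "\<And>z. z \<in> B \<Longrightarrow> a \<le> dist y z"
  shows "measure (P y) (event_in \<Omega> X t B) \<le> t / (C * (V a * \<phi> a)) * measure \<mu> B"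
  using p_le_far[OF t a] far C_pos V_pos[OF a] phi_pos[OF a] t
  by (intro prob_event_le[OF t B]) auto

lemma measure_cball_le:
  assumes r: "r > 0"
  shows "measure \<mu> (cball x r) \<le> V r / C"
proof -
  have "C / V r * measure \<mu> (cball x r) \<le> measure (P x) (event_in \<Omega> X (\<phi> r) (cball x r))"
    using prob_event_ge_near[of "\<phi> r" "cball x r" x] phi_pos psi_phi r emeasure_cball_finite by simp
  also have "\<dots> \<le> 1"
    by (rule hunt_measure_le_1[OF hunt])
  finally show ?thesis
    using V_pos[OF r] C_pos by (simp add: field_simps)
qed

lemma prob_ball_le_far:
  assumes \<rho>: "\<rho> > 0" and M: "M > 0" and L: "1 \<le> L" "M * \<phi> \<rho> \<le> \<phi> (L * \<rho>)"
    and y: "2 * L * \<rho> \<le> dist x y"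
  shows "measure (P y) (event_in \<Omega> X (\<phi> \<rho>) (ball x \<rho>)) \<le> measure \<mu> (ball x \<rho>) / (C * V \<rho>) / M"
proof -
  have pos: "0 < \<phi> \<rho>" "0 < V \<rho>" "0 < L * \<rho>"
    using phi_pos V_pos \<rho> L by auto
  have "\<rho> \<le> L * \<rho>"
    using L \<rho> by simp
  then have "L * \<rho> \<le> dist y z" if "z \<in> ball x \<rho>" for z
    using that y dist_triangle[of x y z] by (simp add: dist_commute)
  then have "measure (P y) (event_in \<Omega> X (\<phi> \<rho>) (ball x \<rho>))
      \<le> \<phi> \<rho> / (C * (V (L * \<rho>) * \<phi> (L * \<rho>))) * measure \<mu> (ball x \<rho>)"
    using pos emeasure_ball_finite by (intro prob_event_le_far) auto
  also have "\<dots> \<le> \<phi> \<rho> / (C * (V \<rho> * (M * \<phi> \<rho>))) * measure \<mu> (ball x \<rho>)"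
  proof -
    have "C * (V \<rho> * (M * \<phi> \<rho>)) \<le> C * (V (L * \<rho>) * \<phi> (L * \<rho>))"
      using V_le[OF \<rho> \<open>\<rho> \<le> L * \<rho>\<close>] L pos M C_pos V_pos[OF pos(3)]
      by (intro mult_left_mono mult_mono) auto
    then show ?thesis
      using pos M C_pos V_pos[OF pos(3)] phi_pos[OF pos(3)]
      by (intro mult_right_mono divide_left_mono mult_pos_pos) auto
  qed
  also have "\<dots> = measure \<mu> (ball x \<rho>) / (C * V \<rho>) / M"
    using pos by simp
  finally show ?thesis .
qed

lemma prob_ball_return_le:
  assumes \<rho>: "\<rho> > 0" and M: "M > 0" and L: "1 \<le> L" "M * \<phi> \<rho> \<le> \<phi> (L * \<rho>)"
  shows "measure (P x) (event_in \<Omega> X (\<phi> \<rho> + \<phi> \<rho>) (ball x \<rho>))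
    \<le> measure \<mu> (ball x \<rho>) / (C * V \<rho>) * (measure \<mu> (ball x (2 * L * \<rho>)) / (C * V \<rho>) + 1 / M)"
proof -
  define \<alpha> where "\<alpha> = measure \<mu> (ball x \<rho>) / (C * V \<rho>)"
  have s: "0 < \<phi> \<rho>" "\<psi> (\<phi> \<rho>) = \<rho>"
    using phi_pos psi_phi \<rho> by auto
  have \<alpha>: "0 \<le> \<alpha>"
    using V_pos[OF \<rho>] C_pos by (simp add: \<alpha>_def)
  have "measure (P x) (event_in \<Omega> X (\<phi> \<rho> + \<phi> \<rho>) (ball x \<rho>))
      \<le> \<alpha> * measure (P x) (event_in \<Omega> X (\<phi> \<rho>) (ball x (2 * L * \<rho>))) + \<alpha> / M"
  proof (rule measure_markov_split_le[OF hunt])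
    show "measure (P y) (event_in \<Omega> X (\<phi> \<rho>) (ball x \<rho>)) \<le> \<alpha>" for y
      using prob_event_le_diag[OF s(1), of "ball x \<rho>"] s emeasure_ball_finite by (simp add: \<alpha>_def)
    show "measure (P y) (event_in \<Omega> X (\<phi> \<rho>) (ball x \<rho>)) \<le> \<alpha> / M" if "y \<notin> ball x (2 * L * \<rho>)" for y
      using that prob_ball_le_far[OF \<rho> M L, of x y] by (simp add: \<alpha>_def)
  qed (use s \<alpha> M in auto)
  also have "\<dots> \<le> \<alpha> * (measure \<mu> (ball x (2 * L * \<rho>)) / (C * V \<rho>)) + \<alpha> / M"
    using mult_left_mono[OF prob_event_le_diag[OF s(1), of "ball x (2 * L * \<rho>)" x] \<alpha>]
      s emeasure_ball_finite by simp
  finally show ?thesis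
    by (simp add: \<alpha>_def distrib_left)
qed

text \<open>The probability of being in \<open>B(x, \<rho>)\<close> at time \<open>2 \<phi> \<rho>\<close> is bounded below by the
  near-diagonal estimate, and above by \<open>prob_ball_return_le\<close>, whose error term \<open>1 / M\<close> a large
  \<open>L\<close> makes small. Comparing the two bounds gives the lower bound on the volume of \<open>B(x, 2 L \<rho>)\<close>.\<close>

lemma measure_ball_ge_scaled:
  obtains K A where "K > 0" "A > 1"
    "\<And>x \<rho>. \<rho> > 0 \<Longrightarrow> C ^ 3 / (2 * K) * V \<rho> \<le> measure \<mu> (ball x (A * \<rho>))"
proof -
  obtain K where K: "K > 0" "\<And>t t'. 0 < t \<Longrightarrow> t \<le> t' \<Longrightarrow> t' \<le> 2 * t \<Longrightarrow> V (\<psi> t') \<le> K * V (\<psi> t)"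
    using V_psi_doubling by blast
  define M where "M = 2 * K / C\<^sup>2"
  have M: "M > 0" using K C_pos by (simp add: M_def)
  obtain L where L: "L > 1" "\<And>\<rho>. \<rho> > 0 \<Longrightarrow> M * \<phi> \<rho> \<le> \<phi> (L * \<rho>)"
    using phi_growth[OF M] by blast
  have "C ^ 3 / (2 * K) * V \<rho> \<le> measure \<mu> (ball x (2 * L * \<rho>))" if \<rho>: "\<rho> > 0" for x \<rho>
  proof -
    define s where "s = \<phi> \<rho>"
    have s: "0 < s" "\<psi> s = \<rho>"
      using phi_pos psi_phi \<rho> by (auto simp: s_def)
    have V\<rho>: "V \<rho> > 0" using V_pos \<rho> by simp
    define \<alpha> where "\<alpha> = measure \<mu> (ball x \<rho>) / (C * V \<rho>)"
    have \<alpha>: "\<alpha> > 0" using measure_ball_pos[OF \<rho>] V\<rho> C_pos by (simp add: \<alpha>_def)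
    have "\<alpha> * (C\<^sup>2 / K) = C / (K * V \<rho>) * measure \<mu> (ball x \<rho>)"
      using C_pos V\<rho> K by (simp add: \<alpha>_def field_simps power2_eq_square)
    also have "\<dots> \<le> C / V (\<psi> (s + s)) * measure \<mu> (ball x \<rho>)"
      using K(2)[of s "s + s"] V_pos[OF psi_pos[of "s + s"]] s C_pos measure_ball_pos[OF \<rho>]
      by (intro mult_right_mono divide_left_mono) auto
    also have "\<dots> \<le> measure (P x) (event_in \<Omega> X (s + s) (ball x \<rho>))"
      using psi_mono[of s "s + s"] s emeasure_ball_finite by (intro prob_event_ge_near) auto
    also have "\<dots> \<le> \<alpha> * (measure \<mu> (ball x (2 * L * \<rho>)) / (C * V \<rho>) + C\<^sup>2 / (2 * K))"
      using prob_ball_return_le[OF \<rho> M _ L(2)[OF \<rho>], of x] L(1) by (simp add: s_def \<alpha>_def M_def)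
    finally have "C\<^sup>2 / K \<le> measure \<mu> (ball x (2 * L * \<rho>)) / (C * V \<rho>) + C\<^sup>2 / (2 * K)"
      using \<alpha> by (rule mult_left_le_imp_le)
    then have "C\<^sup>2 / (2 * K) \<le> measure \<mu> (ball x (2 * L * \<rho>)) / (C * V \<rho>)"
      by simp
    then show ?thesis
      using C_pos V\<rho> by (simp add: pos_le_divide_eq power2_eq_square power3_eq_cube mult_ac)
  qed
  then show ?thesis
    using that[of K "2 * L"] K L by (auto simp: mult.assoc)
qed

lemma measure_ball_ge:
  obtains c where "c > 0" "\<And>x R. R > 0 \<Longrightarrow> c * V R \<le> measure \<mu> (ball x R)"
proof -
  obtain K A where KA: "K > 0" "A > 1"
    "\<And>x \<rho>. \<rho> > 0 \<Longrightarrow> C ^ 3 / (2 * K) * V \<rho> \<le> measure \<mu> (ball x (A * \<rho>))"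
    using measure_ball_ge_scaled by blast
  define c where "c = C ^ 3 / (2 * K) / (max 1 c2 * A powr d2)"
  have "c * V R \<le> measure \<mu> (ball x R)" if R: "R > 0" for x R
  proof -
    have r: "R / A > 0" "R / A \<le> R" "R / (R / A) = A"
      using R KA by (auto simp: field_simps)
    have "V R \<le> max 1 c2 * A powr d2 * V (R / A)"
      using V_le_scaled[OF r(1,2)] r(3) by simp
    then have "c * V R \<le> C ^ 3 / (2 * K) * V (R / A)"
      using KA C_pos by (simp add: c_def field_simps)
    also have "\<dots> \<le> measure \<mu> (ball x R)"
      using KA(3)[OF r(1), of x] KA by simp
    finally show ?thesis .
  qed
  moreover have "c > 0"
    using KA C_pos by (simp add: c_def)
  ultimately show ?thesis
    using that by blast
qed

lemma measure_le_R_hit: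
  assumes "A \<in> sets (P x)" "A \<subseteq> hit_event \<Omega> X x0 r t \<theta>"
  shows "measure (P x) A \<le> R_hit \<Omega> X P x0 x r t \<theta>"
  unfolding R_hit_def using assms hunt_measure_le_1[OF hunt]
  by (intro cSup_upper bdd_aboveI[of _ 1]) auto

lemma p_ge_at_scale:
  obtains c where "c > 0"
    "\<And>r s x y. 0 < r \<Longrightarrow> \<phi> r \<le> s \<Longrightarrow> dist x y \<le> 2 * r \<Longrightarrow> c / V (\<psi> s) \<le> p s x y"
proof -
  obtain G where G: "G \<ge> 1"
    "\<And>r d s. 0 < r \<Longrightarrow> 0 < d \<Longrightarrow> d \<le> 2 * r \<Longrightarrow> \<phi> r \<le> s \<Longrightarrow> V d * \<phi> d \<le> G * V (\<psi> s) * s"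
    using V_phi_le_at_scale by blast
  have "C / G / V (\<psi> s) \<le> p s x y"
    if r: "0 < r" and s: "\<phi> r \<le> s" and xy: "dist x y \<le> 2 * r" for r s x y
  proof -
    have "0 < s" using phi_pos[OF r] s by simp
    then have "1 / (G * V (\<psi> s)) \<le> hk_profile V \<phi> \<psi> s x y"
      using G r s xy by (intro hk_profile_ge) auto
    then have "C * (1 / (G * V (\<psi> s))) \<le> p s x y"
      using p_ge_profile[OF \<open>0 < s\<close>, of x y] C_pos mult_left_mono[of _ _ C] by fastforce
    then show ?thesis
      by simp
  qed
  then show ?thesis
    using that[of "C / G"] C_pos G by auto
qed

lemma prob_cball_ge:
  obtains c where "c > 0"
    "\<And>r t s x x0. 0 < r \<Longrightarrow> \<phi> r \<le> t \<Longrightarrow> t \<le> s \<Longrightarrow> s \<le> 2 * t \<Longrightarrow> dist x x0 \<le> r \<Longrightarrow>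
       c * V r / V (\<psi> t) \<le> measure (P x) (event_in \<Omega> X s (cball x0 r))"
proof -
  obtain a where a: "a > 0"
    "\<And>r s x y. 0 < r \<Longrightarrow> \<phi> r \<le> s \<Longrightarrow> dist x y \<le> 2 * r \<Longrightarrow> a / V (\<psi> s) \<le> p s x y"
    using p_ge_at_scale by blast
  obtain K where K: "K > 0" "\<And>t t'. 0 < t \<Longrightarrow> t \<le> t' \<Longrightarrow> t' \<le> 2 * t \<Longrightarrow> V (\<psi> t') \<le> K * V (\<psi> t)"
    using V_psi_doubling by blast
  obtain b where b: "b > 0" "\<And>x R. R > 0 \<Longrightarrow> b * V R \<le> measure \<mu> (ball x R)"
    using measure_ball_ge by blast
  have "a * b / K * V r / V (\<psi> t) \<le> measure (P x) (event_in \<Omega> X s (cball x0 r))"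
    if r: "0 < r" and t: "\<phi> r \<le> t" "t \<le> s" "s \<le> 2 * t" and x: "dist x x0 \<le> r" for r t s x x0
  proof -
    have "0 < t" "0 < s" using phi_pos[OF r] t by auto
    then have V_psi: "0 < V (\<psi> t)" "0 < V (\<psi> s)" "V (\<psi> s) \<le> K * V (\<psi> t)"
      using V_pos psi_pos K(2)[of t s] t by auto
    have "a / (K * V (\<psi> t)) \<le> p s x y" if "y \<in> cball x0 r" for y
    proof -
      have "dist x y \<le> 2 * r"
        using that x dist_triangle[of x y x0] by (simp add: dist_commute)
      then have "a / V (\<psi> s) \<le> p s x y"
        using a(2) r t by auto
      moreover have "a / (K * V (\<psi> t)) \<le> a / V (\<psi> s)"
        using V_psi a by (intro divide_left_mono) auto
      ultimately show ?thesis by simp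
    qed
    then have hit: "a / (K * V (\<psi> t)) * measure \<mu> (cball x0 r) \<le> measure (P x) (event_in \<Omega> X s (cball x0 r))"
      using \<open>0 < s\<close> a K V_psi by (intro prob_event_ge emeasure_cball_finite) auto
    have "b * V r \<le> measure \<mu> (cball x0 r)"
      using b(2)[OF r, of x0] emeasure_cball_finite[of x0 r]
        measure_mono_fmeasurable[of "ball x0 r" "cball x0 r" \<mu>]
      by (auto simp: mu_borel fmeasurable_def)
    then have "a / (K * V (\<psi> t)) * (b * V r) \<le> a / (K * V (\<psi> t)) * measure \<mu> (cball x0 r)"
      using a K V_psi by (intro mult_left_mono) auto
    then show ?thesis
      using hit by (simp add: field_simps)
  qed
  then show ?thesis
    using that[of "a * b / K"] a b K by auto
qed

lemma prob_cball_le_decay: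
  obtains Q where "Q > 0"
    "\<And>r m y x0. 0 < r \<Longrightarrow> 1 \<le> m \<Longrightarrow>
       measure (P y) (event_in \<Omega> X (m * \<phi> r) (cball x0 r)) \<le> Q * m powr (- (d1 / d4))"
proof -
  obtain Q where Q: "Q > 0"
    "\<And>r m. 0 < r \<Longrightarrow> 1 \<le> m \<Longrightarrow> V r / V (\<psi> (m * \<phi> r)) \<le> Q * m powr (- (d1 / d4))"
    using V_psi_decay by blast
  have "measure (P y) (event_in \<Omega> X (m * \<phi> r) (cball x0 r)) \<le> Q / C\<^sup>2 * m powr (- (d1 / d4))"
    if r: "0 < r" and m: "1 \<le> m" for r m y x0
  proof -
    define u where "u = m * \<phi> r"
    have u: "0 < u" "0 < V (\<psi> u)"
      using m phi_pos[OF r] V_pos psi_pos by (auto simp: u_def)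
    have "measure (P y) (event_in \<Omega> X u (cball x0 r)) \<le> measure \<mu> (cball x0 r) / (C * V (\<psi> u))"
      using u by (intro prob_event_le_diag emeasure_cball_finite) auto
    also have "\<dots> \<le> (V r / C) / (C * V (\<psi> u))"
      using measure_cball_le[OF r] C_pos u by (intro divide_right_mono) auto
    also have "\<dots> = V r / V (\<psi> u) / C\<^sup>2"
      by (simp add: power2_eq_square)
    also have "\<dots> \<le> Q / C\<^sup>2 * m powr (- (d1 / d4))"
      using divide_right_mono[OF Q(2)[OF r m], of "C\<^sup>2"] by (simp add: u_def)
    finally show ?thesis
      by (simp add: u_def)
  qed
  then show ?thesis
    using that[of "Q / C\<^sup>2"] Q C_pos by auto
qed

lemma sum_prob_grid_le:
  assumes d: "d4 < d1"
  obtains W where "W > 0"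
    "\<And>r a x x0 n. 0 < r \<Longrightarrow> 0 < a \<Longrightarrow>
       (\<Sum>k<n. measure (P x) (event_in \<Omega> X (a + real k * \<phi> r) (cball x0 r)))
         \<le> W * measure (P x) (\<Union>k<n. event_in \<Omega> X (a + real k * \<phi> r) (cball x0 r))"
proof -
  obtain Q where Q: "Q > 0"
    "\<And>r m y x0. 0 < r \<Longrightarrow> 1 \<le> m \<Longrightarrow>
       measure (P y) (event_in \<Omega> X (m * \<phi> r) (cball x0 r)) \<le> Q * m powr (- (d1 / d4))"
    using prob_cball_le_decay by blast
  define w where "w m = Q * real m powr (- (d1 / d4))" for m :: nat
  define W where "W = 1 + (\<Sum>m. w m)"
  have summable: "summable w"
    using d consts_pos unfolding w_def
    by (intro summable_mult) (simp add: summable_real_powr_iff field_simps)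
  have w_nonneg: "0 \<le> w m" for m
    using Q by (simp add: w_def)
  have "(\<Sum>k<n. measure (P x) (A k)) \<le> W * measure (P x) (\<Union>k<n. A k)"
    if r: "0 < r" and a: "0 < a" and A_def: "A = (\<lambda>k. event_in \<Omega> X (a + real k * \<phi> r) (cball x0 r))"
    for r a x x0 n A
  proof -
    have "(\<Sum>k<n. measure (P x) (A k)) \<le> (1 + (\<Sum>m\<in>{1..<n}. w m)) * measure (P x) (\<Union>k<n. A k)"
    proof (rule sum_measure_le_measure_UN[OF prob_space.finite_measure[OF hunt_prob_space[OF hunt]]])
      show "A k \<in> sets (P x)" for k
        unfolding A_def using a phi_pos[OF r]
        by (intro event_in_sets[OF hunt]) (auto intro: add_nonneg_nonneg)
      fix j k assume "j < k" "k < n"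
      then have "measure (P x) (disjointed A j \<inter> A k) \<le> w (k - j) * measure (P x) (disjointed A j)"
        unfolding A_def using Q(2)[OF r, of "real (k - j)"]
        by (intro measure_first_visit_le[OF hunt a phi_pos[OF r]] w_nonneg) (auto simp: w_def)
      then show "measure (P x) (disjointed A j \<inter> A k) \<le> measure (P x) (disjointed A j) * w (k - j)"
        by (simp add: mult.commute)
    qed (rule w_nonneg)
    also have "\<dots> \<le> W * measure (P x) (\<Union>k<n. A k)"
      using summable w_nonneg unfolding W_def
      by (intro mult_right_mono add_left_mono sum_le_suminf) auto
    finally show ?thesis .
  qed
  moreover have "W > 0"
    using summable w_nonneg unfolding W_def by (intro add_pos_nonneg suminf_nonneg) auto
  ultimately show ?thesis
    using that by blast
qed

lemma measure_grid_le_R_hit: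
  assumes h: "0 < h" and n: "real n * h \<le> t" and \<theta>: "2 \<le> \<theta>"
  shows "measure (P x) (\<Union>k<n. event_in \<Omega> X (t + h + real k * h) (cball x0 r)) \<le> R_hit \<Omega> X P x0 x r t \<theta>"
proof (rule measure_le_R_hit)
  have "0 \<le> t + h + real k * h" if "k < n" for k
    using grid_in_window[OF h n that] h by auto
  then show "(\<Union>k<n. event_in \<Omega> X (t + h + real k * h) (cball x0 r)) \<in> sets (P x)"
    by (intro sets.finite_UN event_in_sets[OF hunt]) auto
  have "t < t + h + real k * h \<and> t + h + real k * h \<le> \<theta> * t" if "k < n" for k
  proof -
    have "t < t + h + real k * h" "t + h + real k * h \<le> 2 * t" "0 < t"
      using grid_in_window[OF h n that] h by auto
    moreover have "2 * t \<le> \<theta> * t"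
      using \<theta> \<open>0 < t\<close> by (intro mult_right_mono) auto
    ultimately show ?thesis by linarith
  qed
  then show "(\<Union>k<n. event_in \<Omega> X (t + h + real k * h) (cball x0 r)) \<subseteq> hit_event \<Omega> X x0 r t \<theta>"
    by (rule grid_subset_hit_event)
qed

lemma R_hit_lower_bound:
  assumes "d4 < d1"
  obtains c where "c > 0"
    "\<And>r t \<theta> x x0. 0 < r \<Longrightarrow> \<phi> r \<le> t \<Longrightarrow> 2 \<le> \<theta> \<Longrightarrow> dist x x0 \<le> r \<Longrightarrow>
       c * (V r / \<phi> r) * (t / V (\<psi> t)) \<le> R_hit \<Omega> X P x0 x r t \<theta>"
proof -
  obtain c where c: "c > 0"
    "\<And>r t s x x0. 0 < r \<Longrightarrow> \<phi> r \<le> t \<Longrightarrow> t \<le> s \<Longrightarrow> s \<le> 2 * t \<Longrightarrow> dist x x0 \<le> r \<Longrightarrow>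
       c * V r / V (\<psi> t) \<le> measure (P x) (event_in \<Omega> X s (cball x0 r))"
    using prob_cball_ge by blast
  obtain W where W: "W > 0"
    "\<And>r a x x0 n. 0 < r \<Longrightarrow> 0 < a \<Longrightarrow>
       (\<Sum>k<n. measure (P x) (event_in \<Omega> X (a + real k * \<phi> r) (cball x0 r)))
         \<le> W * measure (P x) (\<Union>k<n. event_in \<Omega> X (a + real k * \<phi> r) (cball x0 r))"
    using sum_prob_grid_le[OF assms] by blast
  have "c / (2 * W) * (V r / \<phi> r) * (t / V (\<psi> t)) \<le> R_hit \<Omega> X P x0 x r t \<theta>"
    if r: "0 < r" and t: "\<phi> r \<le> t" and \<theta>: "2 \<le> \<theta>" and x: "dist x x0 \<le> r" for r t \<theta> x x0
  proof -
    define h where "h = \<phi> r"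
    define n where "n = nat \<lfloor>t / h\<rfloor>"
    define A where "A k = event_in \<Omega> X (t + h + real k * h) (cball x0 r)" for k
    have h: "0 < h" "h \<le> t"
      using phi_pos[OF r] t by (auto simp: h_def)
    have n: "t / (2 * h) \<le> real n" "real n * h \<le> t"
      using nat_floor_divide_bounds[OF h] by (auto simp: n_def)
    have "real n * (c * V r / V (\<psi> t)) \<le> (\<Sum>k<n. measure (P x) (A k))"
      using sum_mono[of "{..<n}" "\<lambda>_. c * V r / V (\<psi> t)" "\<lambda>k. measure (P x) (A k)"]
        c(2)[OF r t _ _ x] grid_in_window[OF h(1) n(2)] by (force simp: A_def)
    also have "\<dots> \<le> W * measure (P x) (\<Union>k<n. A k)"
      using W(2)[of r "t + h" x x0 n] r h by (simp add: A_def h_def)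
    also have "measure (P x) (\<Union>k<n. A k) \<le> R_hit \<Omega> X P x0 x r t \<theta>"
      unfolding A_def using h n \<theta> by (intro measure_grid_le_R_hit)
    finally have sum_le: "real n * (c * V r / V (\<psi> t)) \<le> W * R_hit \<Omega> X P x0 x r t \<theta>"
      using W by simp
    have V_psi: "V (\<psi> t) > 0"
      using V_pos psi_pos h by simp
    have "c / (2 * W) * (V r / \<phi> r) * (t / V (\<psi> t)) = t / (2 * h) * (c * V r / V (\<psi> t)) / W"
      using W(1) h V_psi by (simp add: h_def field_simps)
    also have "\<dots> \<le> real n * (c * V r / V (\<psi> t)) / W"
      using n c(1) V_pos[OF r] V_psi W(1) by (intro divide_right_mono mult_right_mono) auto
    also have "\<dots> \<le> R_hit \<Omega> X P x0 x r t \<theta>"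
      unfolding pos_divide_le_eq[OF W(1)] using sum_le by (simp only: mult.commute)
    finally show ?thesis .
  qed
  moreover have "c / (2 * W) > 0"
    using c W by simp
  ultimately show ?thesis
    using that by blast
qed

end

theorem corollary4p14:
  fixes \<mu> :: "'a::metric_space measure"
    and \<Omega> :: "'w set" and X :: "real \<Rightarrow> 'w \<Rightarrow> 'a option" and P :: "'a \<Rightarrow> 'w measure"
    and p :: "real \<Rightarrow> 'a \<Rightarrow> 'a \<Rightarrow> real"
    and V \<phi> :: "real \<Rightarrow> real"
    and c1 c2 c3 c4 d1 d2 d3 d4 :: real
  assumes loc_compact: "locally compact (UNIV :: 'a set)"
    and separable: "\<exists>D :: 'a set. countable D \<and> closure D = UNIV"
    and mu_borel: "sets \<mu> = sets borel"
    and mu_radon: "\<And>K. compact K \<Longrightarrow> emeasure \<mu> K < \<infinity>"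
    and mu_full_support: "\<And>U. open U \<Longrightarrow> U \<noteq> {} \<Longrightarrow> emeasure \<mu> U > 0"
    and hunt: "hunt_process \<Omega> X P"
    and hk: "heat_kernel_of \<Omega> X P \<mu> p"
    and dirichlet: "regular_no_killing \<mu> p"
    and V_pos: "\<And>r. r > 0 \<Longrightarrow> V r > 0"
    and V_mono: "mono_on {0<..} V"
    and phi_mono: "strict_mono_on {0<..} \<phi>"
    and phi_onto: "\<phi> ` {0<..} = {0<..}"
    and consts_pos: "c1 > 0" "c2 > 0" "c3 > 0" "c4 > 0" "d1 > 0" "d2 > 0" "d3 > 0" "d4 > 0"
    and V_scale: "\<And>r R. 0 < r \<Longrightarrow> r < R \<Longrightarrow>
                    c1 * (R / r) powr d1 \<le> V R / V r \<and> V R / V r \<le> c2 * (R / r) powr d2"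
    and phi_scale: "\<And>r R. 0 < r \<Longrightarrow> r < R \<Longrightarrow>
                    c3 * (R / r) powr d3 \<le> \<phi> R / \<phi> r \<and> \<phi> R / \<phi> r \<le> c4 * (R / r) powr d4"
    and hk_bounds: "\<exists>C > 0. \<forall>t > 0. \<forall>x y.
                    C * hk_profile V \<phi> (the_inv_into {0<..} \<phi>) t x y \<le> p t x y \<and>
                    p t x y \<le> (1 / C) * hk_profile V \<phi> (the_inv_into {0<..} \<phi>) t x y"
    and d1_gt_d4: "d1 > d4"
    and balls_rel_compact: "\<And>(x::'a) r. compact (closure (ball x r))"
  shows "\<exists>C1 > 0. \<exists>C2 > 0. \<forall>r > 0. \<forall>t \<ge> \<phi> r. \<forall>\<theta>. \<theta> > 1 \<longrightarrow> \<theta> \<ge> C1 \<longrightarrow>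
           (\<forall>x x0. dist x x0 \<le> r \<longrightarrow>
              R_hit \<Omega> X P x0 x r t \<theta> \<ge>
                C2 * (V r / \<phi> r) * (t / V (the_inv_into {0<..} \<phi> t)))"
proof -
  obtain C where C: "C > 0"
    "\<And>t x y. t > 0 \<Longrightarrow> C * hk_profile V \<phi> (the_inv_into {0<..} \<phi>) t x y \<le> p t x y"
    "\<And>t x y. t > 0 \<Longrightarrow> p t x y \<le> (1 / C) * hk_profile V \<phi> (the_inv_into {0<..} \<phi>) t x y"
    using hk_bounds by blast
  interpret hk_estimates V \<phi> c1 c2 c3 c4 d1 d2 d3 d4 \<mu> \<Omega> X P p C
    by unfold_locales (use assms C in auto)
  obtain c where "c > 0"
    "\<And>r t \<theta> x x0. 0 < r \<Longrightarrow> \<phi> r \<le> t \<Longrightarrow> 2 \<le> \<theta> \<Longrightarrow> dist x x0 \<le> r \<Longrightarrow>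
       c * (V r / \<phi> r) * (t / V (\<psi> t)) \<le> R_hit \<Omega> X P x0 x r t \<theta>"
    using R_hit_lower_bound[OF d1_gt_d4] by blast
  then show ?thesis
    unfolding \<psi>_def by (intro exI[of _ 2] exI[of _ c]) auto
qed

end
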